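(* Let $p$ be a prime and $m\ge1$. Suppose $\underline{x}=(x_{1},\dots,x_{m})$ and $\underline{y}=(y_{1},\dots,y_{m})$ are elements of $SU(p)^{m}$ with $\underline{c}:=[\underline{x},\underline{y}]=(c,\dots,c)\in\Delta(\mathbb{Z}/p)$ for some $c\in Z(SU(p))$, $c\ne 1$. Let $\underline{z}\in SU(p)^{m}$ satisfy $[\underline{x},\underline{z}],[\underline{y},\underline{z}]\in\Delta(\mathbb{Z}/p)$, and write $[\underline{x},\underline{z}]=\underline{c}^{b}$ and $[\underline{y},\underline{z}]=\underline{c}^{a}$ with integers $0\le a,b<p$. Then there is $\underline{w}=(w_{1},\dots,w_{m})\in Z(SU(p)^{m})$ such that $\underline{z}=\underline{w}\,\underline{x}^{-a}\underline{y}^{b}$, i.e. $z_{i}=w_{i}x_{i}^{-a}y_{i}^{b}$ for all $i$.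
   Context: $Z(SU(p))\cong\mathbb{Z}/p$ is the center of $SU(p)$, and $\Delta(\mathbb{Z}/p)=\{(c,\dots,c): c\in Z(SU(p))\}\subset Z(SU(p)^m)$. The commutator is $[u,v]=uvu^{-1}v^{-1}$. *)

theory Defs
  imports "HOL-Analysis.Analysis"
begin

definition cadj :: "complex^'n^'n \<Rightarrow> complex^'n^'n" where
  "cadj A = (\<chi> i j. cnj (A $ j $ i))"

definition SU :: "(complex^'n^'n) set" where
  "SU = {A. A ** cadj A = mat 1 \<and> cadj A ** A = mat 1 \<and> det A = 1}"

definition ZSU :: "(complex^'n^'n) set" where
  "ZSU = {c \<in> SU. \<forall>g\<in>SU. c ** g = g ** c}"

primrec mpow :: "'a::semiring_1^'n^'n \<Rightarrow> nat \<Rightarrow> 'a^'n^'n" where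
  "mpow A 0 = mat 1"
| "mpow A (Suc k) = A ** mpow A k"

definition comm :: "complex^'n^'n \<Rightarrow> complex^'n^'n \<Rightarrow> complex^'n^'n" where
  "comm u v = u ** v ** matrix_inv u ** matrix_inv v"

end

theory Submission
  imports Defs
begin

text \<open>A central element of SU(p) is a scalar \<open>\<zeta>\<close> with \<open>\<zeta>\<^sup>p = 1\<close>, so \<open>[x,y] = c \<noteq> 1\<close> says
  \<open>x y = \<zeta> y x\<close> with \<open>\<zeta>\<close> a primitive p-th root of unity. If \<open>u M u\<^sup>-\<^sup>1 = \<alpha> M\<close> with
  \<open>\<alpha> \<noteq> 1\<close>, then \<open>tr M = 0\<close>; applied to \<open>(x\<^sup>i y\<^sup>j)\<^sup>-\<^sup>1 x\<^sup>k y\<^sup>l\<close> this shows that the \<open>p\<^sup>2\<close> unitary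
  monomials \<open>x\<^sup>i y\<^sup>j\<close> (\<open>i, j < p\<close>) are orthogonal for the Frobenius inner product, hence a
  basis of all \<open>p \<times> p\<close> matrices. A traceless matrix commuting with \<open>x\<close> and \<open>y\<close> is
  orthogonal to every monomial, so only scalars commute with both \<open>x\<close> and \<open>y\<close>. Finally
  \<open>z (x\<^sup>-\<^sup>a y\<^sup>b)\<^sup>-\<^sup>1\<close> commutes with \<open>x\<close> and \<open>y\<close>, because the factors \<open>\<zeta>\<^sup>b\<close> and \<open>\<zeta>\<^sup>a\<close> by which
  \<open>z\<close> and \<open>x\<^sup>-\<^sup>a y\<^sup>b\<close> fail to commute with \<open>x\<close> and \<open>y\<close> are the same.\<close>

lemma mat_mult_left: "mat a ** A = (\<chi> i j. a * A $ i $ j)"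
  for A :: "'a::semiring_1^'m^'n"
  by (simp add: matrix_matrix_mult_def mat_def vec_eq_iff if_distrib[of "\<lambda>x. x * _"] cong: if_cong)

lemma mat_mult_right: "A ** mat a = (\<chi> i j. A $ i $ j * a)"
  for A :: "'a::semiring_1^'m^'n"
  by (simp add: matrix_matrix_mult_def mat_def vec_eq_iff if_distrib[of "\<lambda>x. _ * x"] cong: if_cong)

lemma mat_mult_commute: "mat a ** A = A ** mat a"
  for A :: "'a::comm_semiring_1^'m^'n"
  by (simp add: mat_mult_left mat_mult_right mult.commute)

lemma mat_mult_mat: "mat a ** mat b = (mat (a * b) :: 'a::semiring_1^'n^'n)"
  by (subst mat_mult_left) (simp add: mat_def vec_eq_iff)

lemma mat_mult_mat_commute: "mat a ** A ** mat b = mat (a * b) ** A"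
  for A :: "'a::comm_semiring_1^'n^'n"
  by (metis mat_mult_commute mat_mult_mat matrix_mul_assoc)

lemma mpow_mat: "mpow (mat a) k = (mat (a ^ k) :: 'a::semiring_1^'n^'n)"
  by (induction k) (simp_all add: mat_mult_mat)

lemma trace_mat: "trace (mat a :: 'a::semiring_1^'n^'n) = of_nat CARD('n) * a"
  by (simp add: trace_def mat_def)

lemma trace_mat_mult: "trace (mat a ** A) = a * trace A"
  for A :: "'a::semiring_1^'n^'n"
  by (simp add: trace_def mat_mult_left sum_distrib_left)

lemma matrix_diff_ldistrib: "A ** (B - C) = A ** B - A ** C"
  for A :: "'a::ring_1^'n^'m"
  by (simp add: matrix_matrix_mult_def vec_eq_iff sum_subtractf algebra_simps)

lemma matrix_diff_rdistrib: "(B - C) ** A = B ** A - C ** A"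
  for A :: "'a::ring_1^'n^'m"
  by (simp add: matrix_matrix_mult_def vec_eq_iff sum_subtractf algebra_simps)

lemma det_mat: "det (mat a :: 'a::comm_ring_1^'n^'n) = a ^ CARD('n)"
  by (simp add: det_diagonal mat_def)

definition diag_mat :: "('n \<Rightarrow> 'a::zero) \<Rightarrow> 'a^'n^'n" where
  "diag_mat f = (\<chi> i j. if i = j then f i else 0)"

lemma diag_mat_mult_left: "diag_mat f ** A = (\<chi> i j. f i * A $ i $ j)"
  for A :: "'a::semiring_1^'m^'n"
  by (simp add: diag_mat_def matrix_matrix_mult_def vec_eq_iff if_distrib[of "\<lambda>x. x * _"] cong: if_cong)

lemma diag_mat_mult_right: "A ** diag_mat f = (\<chi> i j. A $ i $ j * f j)"
  for A :: "'a::semiring_1^'m^'n"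
  by (simp add: diag_mat_def matrix_matrix_mult_def vec_eq_iff if_distrib[of "\<lambda>x. _ * x"] cong: if_cong)

lemma det_diag_mat: "det (diag_mat f :: 'a::comm_ring_1^'n^'n) = prod f UNIV"
  by (simp add: det_diagonal diag_mat_def)

lemma matrix_inv_mult:
  assumes "invertible A"
  shows "A ** matrix_inv A = mat 1" and "matrix_inv A ** A = mat 1"
  using someI_ex[OF assms[unfolded invertible_def]] by (simp_all add: matrix_inv_def)

lemma matrix_inv_mult_cancel:
  assumes "invertible A"
  shows "A ** (matrix_inv A ** B) = B" and "matrix_inv A ** (A ** B) = B"
  by (simp_all add: matrix_mul_assoc matrix_inv_mult[OF assms])

lemma matrix_inv_unique:
  fixes A B :: "'a::field^'n^'n"
  assumes "A ** B = mat 1"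
  shows "matrix_inv A = B"
proof -
  have inv: "invertible A"
    using assms invertible_right_inverse by blast
  have "matrix_inv A = matrix_inv A ** (A ** B)"
    by (simp add: assms)
  also have "\<dots> = B"
    by (simp add: matrix_mul_assoc matrix_inv_mult(2)[OF inv])
  finally show ?thesis .
qed

lemma cadj_mult: "cadj (A ** B) = cadj B ** cadj A"
  by (simp add: cadj_def matrix_matrix_mult_def vec_eq_iff mult.commute)

lemma cadj_cadj: "cadj (cadj A) = A"
  by (simp add: cadj_def vec_eq_iff)

lemma cadj_mat: "cadj (mat a :: complex^'n^'n) = mat (cnj a)"
  by (simp add: cadj_def vec_eq_iff mat_def)

lemma cadj_diag_mat: "cadj (diag_mat f) = diag_mat (\<lambda>i. cnj (f i))"
  by (auto simp: cadj_def diag_mat_def vec_eq_iff)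

lemma SU_iff: "A \<in> SU \<longleftrightarrow> A ** cadj A = mat 1 \<and> det A = 1"
  using matrix_left_right_inverse by (auto simp: SU_def)

lemma SU_invertible: "A \<in> SU \<Longrightarrow> invertible A"
  by (auto simp: SU_def invertible_def)

lemma SU_matrix_inv_eq: "A \<in> SU \<Longrightarrow> matrix_inv A = cadj A"
  by (simp add: SU_iff matrix_inv_unique)

lemma mat_1_in_SU: "mat 1 \<in> SU"
  by (simp add: SU_iff cadj_mat)

lemma mult_in_SU:
  assumes "A \<in> SU" "B \<in> SU"
  shows "A ** B \<in> SU"
proof -
  have "A ** B ** cadj (A ** B) = A ** (B ** cadj B) ** cadj A"
    by (simp add: cadj_mult matrix_mul_assoc)
  then show ?thesis
    using assms by (simp add: SU_iff det_mul)
qed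

lemma matrix_inv_in_SU:
  assumes "A \<in> SU"
  shows "matrix_inv A \<in> SU"
proof -
  have "det A * det (cadj A) = 1"
    using assms by (metis SU_iff det_mul det_I)
  then show ?thesis
    using assms by (simp add: SU_matrix_inv_eq SU_def cadj_cadj)
qed

lemma mpow_in_SU: "A \<in> SU \<Longrightarrow> mpow A k \<in> SU"
  by (induction k) (simp_all add: mat_1_in_SU mult_in_SU)

lemma diag_mat_in_SU:
  assumes "\<And>i. f i * cnj (f i) = 1" and "prod f UNIV = 1"
  shows "diag_mat f \<in> SU"
  using assms by (simp add: SU_iff cadj_diag_mat diag_mat_mult_left det_diag_mat)
    (simp add: diag_mat_def mat_def vec_eq_iff)

section \<open>The center of SU(n)\<close>

lemma ZSU_off_diagonal:
  assumes "c \<in> ZSU" and "j \<noteq> k"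
  shows "c $ j $ k = 0"
proof -
  define f where "f i = (if i = j then \<i> else if i = k then - \<i> else 1)" for i
  have "prod f UNIV = f j * prod f (UNIV - {j})"
    by (simp add: prod.remove)
  also have "prod f (UNIV - {j}) = f k * prod f (UNIV - {j} - {k})"
    using assms(2) by (simp add: prod.remove)
  also have "prod f (UNIV - {j} - {k}) = 1"
    by (rule prod.neutral) (simp add: f_def)
  finally have "diag_mat f \<in> SU"
    using assms(2) by (intro diag_mat_in_SU) (auto simp: f_def)
  then have "(c ** diag_mat f) $ j $ k = (diag_mat f ** c) $ j $ k"
    using assms(1) by (simp add: ZSU_def)
  then have "c $ j $ k * (- \<i>) = \<i> * c $ j $ k"
    using assms(2) by (simp add: diag_mat_mult_left diag_mat_mult_right f_def)
  then show ?thesis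
    by (simp add: algebra_simps)
qed

text \<open>The rotation by a right angle in the coordinate plane of \<open>j\<close> and \<open>k\<close>.\<close>
definition rotation_mat :: "'n \<Rightarrow> 'n \<Rightarrow> complex^'n^'n" where
  "rotation_mat j k =
     (\<chi> a b. if Transposition.transpose j k a = b then (if b = j then -1 else 1) else 0)"

lemma rotation_mat_in_SU:
  assumes "j \<noteq> k"
  shows "rotation_mat j k \<in> SU"
proof -
  let ?t = "Transposition.transpose j k"
  let ?f = "\<lambda>a. if a = j then -1 else 1 :: complex"
  have "rotation_mat j k = (\<chi> a. diag_mat ?f $ ?t a)"
    by (auto simp: rotation_mat_def diag_mat_def vec_eq_iff)
  then have "det (rotation_mat j k) = of_int (sign ?t) * prod ?f UNIV"
    by (simp add: det_permute_rows permutes_swap_id det_diag_mat)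
  also have "prod ?f UNIV = ?f j * prod ?f (UNIV - {j})"
    by (simp add: prod.remove)
  also have "prod ?f (UNIV - {j}) = 1"
    by (rule prod.neutral) simp
  finally have det: "det (rotation_mat j k) = 1"
    using assms by (simp add: sign_swap_id)
  have "(\<Sum>c\<in>UNIV. rotation_mat j k $ a $ c * cnj (rotation_mat j k $ b $ c)) =
        (if a = b then 1 else 0)" for a b
  proof -
    have "(\<Sum>c\<in>UNIV. rotation_mat j k $ a $ c * cnj (rotation_mat j k $ b $ c)) =
          (\<Sum>c\<in>UNIV. if c = ?t a then (if ?t a = ?t b then 1 else 0) else 0)"
      by (rule sum.cong) (auto simp: rotation_mat_def)
    then show ?thesis
      by (simp add: sum.delta') (metis transpose_eq_imp_eq)
  qed
  then have "rotation_mat j k ** cadj (rotation_mat j k) = mat 1"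
    by (simp add: matrix_matrix_mult_def cadj_def vec_eq_iff mat_def)
  with det show ?thesis
    by (simp add: SU_iff)
qed

lemma ZSU_imp_scalar:
  assumes "c \<in> ZSU"
  shows "\<exists>\<zeta>. c = mat \<zeta>"
proof -
  have diag: "c = diag_mat (\<lambda>a. c $ a $ a)"
    using ZSU_off_diagonal[OF assms] by (auto simp: diag_mat_def vec_eq_iff)
  have "c $ j $ j = c $ k $ k" if "j \<noteq> k" for j k
  proof -
    have "(c ** rotation_mat j k) $ j $ k = (rotation_mat j k ** c) $ j $ k"
      using assms rotation_mat_in_SU[OF that] by (simp add: ZSU_def)
    then have "c $ j $ j * rotation_mat j k $ j $ k = rotation_mat j k $ j $ k * c $ k $ k"
      by (subst (asm) (1 2) diag) (simp only: diag_mat_mult_left diag_mat_mult_right vec_lambda_beta)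
    then show ?thesis
      using that by (simp add: rotation_mat_def)
  qed
  then have "c = mat (c $ j $ j)" for j
    using ZSU_off_diagonal[OF assms] by (auto simp: mat_def vec_eq_iff) metis
  then show ?thesis
    by blast
qed

lemma scalar_in_ZSU: "A = mat a \<Longrightarrow> A \<in> SU \<Longrightarrow> A \<in> ZSU"
  by (simp add: ZSU_def mat_mult_commute)

section \<open>q-commuting matrices\<close>

definition q_commute :: "'a::semiring_1 \<Rightarrow> 'a^'n^'n \<Rightarrow> 'a^'n^'n \<Rightarrow> bool" where
  "q_commute q u v \<longleftrightarrow> u ** v = mat q ** v ** u"

lemma q_commute_1_iff: "q_commute 1 u v \<longleftrightarrow> u ** v = v ** u"
  by (simp add: q_commute_def)

lemma q_commute_refl: "q_commute 1 u u"
  by (simp add: q_commute_def)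

lemma q_commute_mult:
  fixes u v w :: "'a::comm_semiring_1^'n^'n"
  assumes "q_commute a u v" and "q_commute b u w"
  shows "q_commute (a * b) u (v ** w)"
proof -
  have "u ** (v ** w) = mat a ** v ** (u ** w)"
    using assms(1) by (simp add: q_commute_def matrix_mul_assoc)
  also have "\<dots> = mat a ** v ** mat b ** w ** u"
    using assms(2) by (simp add: q_commute_def matrix_mul_assoc)
  finally show ?thesis
    by (simp add: q_commute_def mat_mult_mat_commute matrix_mul_assoc)
qed

lemma q_commute_mpow:
  fixes u v :: "'a::comm_semiring_1^'n^'n"
  assumes "q_commute a u v"
  shows "q_commute (a ^ k) u (mpow v k)"
  by (induction k) (simp_all add: q_commute_1_iff q_commute_mult assms)

lemma q_commute_matrix_inv:
  fixes u v :: "'a::field^'n^'n"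
  assumes "q_commute a u v" and "invertible v" and "a \<noteq> 0"
  shows "q_commute (inverse a) u (matrix_inv v)"
proof -
  let ?w = "matrix_inv v"
  have "?w ** u = ?w ** (u ** v) ** ?w"
    by (simp add: matrix_mul_assoc[symmetric] matrix_inv_mult[OF assms(2)])
  also have "\<dots> = ?w ** v ** mat a ** u ** ?w"
    using assms(1) by (simp add: q_commute_def mat_mult_commute[of a v] matrix_mul_assoc)
  finally have "?w ** u = mat a ** u ** ?w"
    by (simp add: matrix_mul_assoc matrix_inv_mult[OF assms(2)])
  then have "mat (inverse a) ** (?w ** u) = u ** ?w"
    using assms(3) by (simp add: matrix_mul_assoc mat_mult_mat)
  then show ?thesis
    by (simp add: q_commute_def matrix_mul_assoc)
qed

lemma q_commute_sym:
  fixes u v :: "'a::field^'n^'n"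
  assumes "q_commute a u v" and "a \<noteq> 0"
  shows "q_commute (inverse a) v u"
proof -
  have "mat (inverse a) ** (u ** v) = v ** u"
    using assms by (simp add: q_commute_def matrix_mul_assoc mat_mult_mat)
  then show ?thesis
    by (simp add: q_commute_def matrix_mul_assoc)
qed

text \<open>Conjugation by \<open>u\<close> preserves the trace of \<open>v\<close> but also multiplies it by \<open>a\<close>.\<close>
lemma q_commute_trace_eq_0:
  fixes u v :: "'a::field^'n^'n"
  assumes "q_commute a u v" and "invertible u" and "a \<noteq> 1"
  shows "trace v = 0"
proof -
  have "trace v = trace (matrix_inv u ** (u ** v))"
    by (simp add: matrix_inv_mult_cancel[OF assms(2)])
  also have "\<dots> = trace (u ** v ** matrix_inv u)"
    by (rule trace_mul_sym)
  also have "u ** v ** matrix_inv u = mat a ** v"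
    using assms(1) by (simp add: q_commute_def matrix_inv_mult[OF assms(2)] flip: matrix_mul_assoc)
  finally have "trace v = a * trace v"
    by (simp add: trace_mat_mult)
  then show ?thesis
    using assms(3) by (metis mult_cancel_right2)
qed

lemma comm_eq_mat_imp_q_commute:
  assumes "invertible u" and "invertible v" and "comm u v = mat a"
  shows "q_commute a u v"
proof -
  have "comm u v ** (v ** u) = u ** v"
    by (simp add: comm_def matrix_inv_mult matrix_inv_mult_cancel assms(1,2) flip: matrix_mul_assoc)
  then show ?thesis
    using assms(3) by (simp add: q_commute_def matrix_mul_assoc)
qed

lemma power_gcd_eq_1:
  fixes z :: "'a::monoid_mult"
  assumes "z ^ m = 1" and "z ^ n = 1"
  shows "z ^ gcd m n = 1"
proof (cases "m = 0")
  case True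
  then show ?thesis
    using assms(2) by simp
next
  case False
  then obtain r s where "m * r = n * s + gcd m n"
    using bezout_nat by blast
  then have "z ^ (m * r) = z ^ (n * s) * z ^ gcd m n"
    by (simp add: power_add)
  then show ?thesis
    using assms by (simp add: power_mult)
qed

lemma prime_root_of_unity_inj_on:
  fixes z :: "'a::field"
  assumes "prime p" and "z ^ p = 1" and "z \<noteq> 1"
  shows "inj_on ((^) z) {..<p}"
proof (rule linorder_inj_onI')
  fix i k
  assume "i \<in> {..<p}" "k \<in> {..<p}" "i < k"
  then have "0 < k - i" "k - i < p"
    by auto
  then have "coprime p (k - i)"
    using assms(1) by (intro prime_imp_coprime) (auto dest: nat_dvd_not_less)
  have "z \<noteq> 0"
    using assms(2) prime_gt_0_nat[OF assms(1)] by (auto simp: power_0_left)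
  show "z ^ i \<noteq> z ^ k"
  proof
    assume "z ^ i = z ^ k"
    also have "z ^ k = z ^ i * z ^ (k - i)"
      using \<open>i < k\<close> by (simp flip: power_add)
    finally have "z ^ (k - i) = 1"
      using \<open>z \<noteq> 0\<close> by simp
    then have "z ^ gcd p (k - i) = 1"
      using assms(2) by (intro power_gcd_eq_1)
    with \<open>coprime p (k - i)\<close> assms(3) show False
      by simp
  qed
qed

section \<open>The Frobenius inner product\<close>

lemma inner_matrix_eq_trace: "inner A B = Re (trace (cadj A ** B))"
  for A B :: "complex^'n^'n"
proof -
  have "inner A B = (\<Sum>i\<in>UNIV. \<Sum>j\<in>UNIV. Re (cnj (A $ i $ j) * B $ i $ j))"
    by (simp add: inner_vec_def inner_complex_def)
  also have "\<dots> = (\<Sum>j\<in>UNIV. \<Sum>i\<in>UNIV. Re (cnj (A $ i $ j) * B $ i $ j))"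
    by (rule sum.swap)
  also have "\<dots> = Re (trace (cadj A ** B))"
    by (simp add: trace_def cadj_def matrix_matrix_mult_def)
  finally show ?thesis .
qed

lemma trace_cadj_mat_mult: "trace (cadj (mat s ** A) ** (mat t ** B)) = cnj s * t * trace (cadj A ** B)"
  for A B :: "complex^'n^'n"
proof -
  have "cadj (mat s ** A) ** (mat t ** B) = cadj A ** (mat (cnj s) ** mat t) ** B"
    by (simp add: cadj_mult cadj_mat matrix_mul_assoc)
  also have "\<dots> = mat (cnj s * t) ** (cadj A ** B)"
    by (metis mat_mult_commute mat_mult_mat matrix_mul_assoc)
  finally show ?thesis
    by (simp add: trace_mat_mult)
qed

lemma eq_0_if_orthogonal_to_orthogonal_basis:
  fixes S :: "'a::euclidean_space set"
  assumes "pairwise orthogonal S" and "0 \<notin> S" and "DIM('a) \<le> card S"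
    and "\<And>v. v \<in> S \<Longrightarrow> orthogonal v x"
  shows "x = 0"
proof -
  have "independent S"
    using assms(1,2) by (rule pairwise_orthogonal_independent)
  then have "x \<in> span S"
    using assms(3) card_ge_dim_independent[of S UNIV] by auto
  moreover have "orthogonal x v" if "v \<in> S" for v
    using assms(4)[OF that] by (simp add: orthogonal_commute)
  ultimately have "orthogonal x x"
    by (rule orthogonal_to_span)
  then show ?thesis
    by (simp add: orthogonal_self)
qed

section \<open>Only scalars commute with a q-commuting pair\<close>

lemma q_commute_monomial:
  fixes x y :: "'a::field^'n^'n"
  assumes "q_commute \<zeta> x y" and "\<zeta> \<noteq> 0"
  shows "q_commute (\<zeta> ^ j) x (mpow x i ** mpow y j)"
    and "q_commute (inverse \<zeta> ^ i) y (mpow x i ** mpow y j)"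
  using q_commute_mult[OF q_commute_mpow[OF q_commute_refl] q_commute_mpow[OF assms(1)], of i j]
    q_commute_mult[OF q_commute_mpow[OF q_commute_sym[OF assms]] q_commute_mpow[OF q_commute_refl], of i j]
  by simp_all

text \<open>Taking \<open>k = l = 0\<close> covers every \<open>T\<close> commuting with \<open>x\<close> and \<open>y\<close>.\<close>
lemma trace_cadj_monomial_mult_eq_0:
  fixes x y T :: "complex^'n^'n"
  assumes x: "x \<in> SU" and y: "y \<in> SU" and q: "q_commute \<zeta> x y" and "\<zeta> \<noteq> 0"
    and inj: "inj_on ((^) \<zeta>) {..<CARD('n)}"
    and "i < CARD('n)" "j < CARD('n)" "k < CARD('n)" "l < CARD('n)" and "(i, j) \<noteq> (k, l)"
    and Tx: "q_commute (\<zeta> ^ l) x T" and Ty: "q_commute (inverse \<zeta> ^ k) y T"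
  shows "trace (cadj (mpow x i ** mpow y j) ** T) = 0"
proof -
  let ?g = "mpow x i ** mpow y j"
  have g: "?g \<in> SU"
    by (simp add: mult_in_SU mpow_in_SU x y)
  have "\<zeta> ^ j \<noteq> \<zeta> ^ l \<or> \<zeta> ^ i \<noteq> \<zeta> ^ k"
    using inj_onD[OF inj] assms(6-10) by auto
  then have ne: "inverse (\<zeta> ^ j) * \<zeta> ^ l \<noteq> 1 \<or> inverse (inverse \<zeta> ^ i) * inverse \<zeta> ^ k \<noteq> 1"
    using \<open>\<zeta> \<noteq> 0\<close> by (auto simp: field_simps power_inverse)
  have "q_commute (inverse (\<zeta> ^ j) * \<zeta> ^ l) x (matrix_inv ?g ** T)"
    using \<open>\<zeta> \<noteq> 0\<close> g
    by (intro q_commute_mult q_commute_matrix_inv q_commute_monomial q Tx) (simp_all add: SU_invertible)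
  moreover have "q_commute (inverse (inverse \<zeta> ^ i) * inverse \<zeta> ^ k) y (matrix_inv ?g ** T)"
    using \<open>\<zeta> \<noteq> 0\<close> g
    by (intro q_commute_mult q_commute_matrix_inv q_commute_monomial q Ty) (simp_all add: SU_invertible)
  ultimately have "trace (matrix_inv ?g ** T) = 0"
    using ne q_commute_trace_eq_0 SU_invertible x y by blast
  then show ?thesis
    using g by (simp add: SU_matrix_inv_eq)
qed

text \<open>\<open>inner\<close> is the real inner product, so each monomial is paired with its multiple by \<open>\<i>\<close>;
  these \<open>2 n\<^sup>2\<close> matrices are orthogonal of equal length.\<close>
lemma inner_scaled_monomials:
  fixes x y :: "complex^'n^'n"
  assumes x: "x \<in> SU" and y: "y \<in> SU" and q: "q_commute \<zeta> x y" and "\<zeta> \<noteq> 0"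
    and inj: "inj_on ((^) \<zeta>) {..<CARD('n)}"
    and "i < CARD('n)" "j < CARD('n)" "k < CARD('n)" "l < CARD('n)"
    and "s \<in> {1, \<i>}" "t \<in> {1, \<i>}"
  shows "inner (mat s ** (mpow x i ** mpow y j)) (mat t ** (mpow x k ** mpow y l)) =
    (if (i, j, s) = (k, l, t) then real CARD('n) else 0)"
proof (cases "(i, j) = (k, l)")
  case True
  have "mpow x i ** mpow y j \<in> SU"
    by (simp add: mult_in_SU mpow_in_SU x y)
  then have "trace (cadj (mpow x i ** mpow y j) ** (mpow x k ** mpow y l)) = of_nat CARD('n)"
    using True by (simp add: SU_def trace_I)
  then show ?thesis
    using True assms(10,11) by (auto simp: inner_matrix_eq_trace trace_cadj_mat_mult)
next
  case False
  then have "trace (cadj (mpow x i ** mpow y j) ** (mpow x k ** mpow y l)) = 0"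
    using assms(6-9) trace_cadj_monomial_mult_eq_0[OF x y q \<open>\<zeta> \<noteq> 0\<close> inj]
      q_commute_monomial[OF q \<open>\<zeta> \<noteq> 0\<close>] by blast
  then show ?thesis
    using False by (auto simp: inner_matrix_eq_trace trace_cadj_mat_mult)
qed

lemma inner_scaled_monomial_traceless_commutant:
  fixes x y C :: "complex^'n^'n"
  assumes x: "x \<in> SU" and y: "y \<in> SU" and q: "q_commute \<zeta> x y" and "\<zeta> \<noteq> 0"
    and inj: "inj_on ((^) \<zeta>) {..<CARD('n)}" and "i < CARD('n)" "j < CARD('n)"
    and "x ** C = C ** x" and "y ** C = C ** y" and "trace C = 0"
  shows "inner (mat s ** (mpow x i ** mpow y j)) C = 0"
proof -
  have "trace (cadj (mpow x i ** mpow y j) ** C) = 0"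
  proof (cases "(i, j) = (0, 0)")
    case True
    then show ?thesis
      using assms(10) by (simp add: cadj_mat)
  next
    case False
    have Cx: "q_commute (\<zeta> ^ 0) x C" and Cy: "q_commute (inverse \<zeta> ^ 0) y C"
      using assms(8,9) by (simp_all add: q_commute_1_iff)
    show ?thesis
      using False assms(6,7)
      by (intro trace_cadj_monomial_mult_eq_0[OF x y q \<open>\<zeta> \<noteq> 0\<close> inj _ _ _ _ _ Cx Cy]) auto
  qed
  then show ?thesis
    using trace_cadj_mat_mult[of s "mpow x i ** mpow y j" 1 C]
    by (simp add: inner_matrix_eq_trace)
qed

lemma commutes_with_q_commuting_pair_imp_scalar:
  fixes x y W :: "complex^'n^'n"
  assumes x: "x \<in> SU" and y: "y \<in> SU" and q: "q_commute \<zeta> x y" and "\<zeta> \<noteq> 0"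
    and inj: "inj_on ((^) \<zeta>) {..<CARD('n)}"
    and "x ** W = W ** x" and "y ** W = W ** y"
  shows "W = mat (trace W / of_nat CARD('n))"
proof -
  let ?n = "CARD('n)"
  define C where "C = W - mat (trace W / of_nat ?n)"
  have C: "x ** C = C ** x" "y ** C = C ** y" "trace C = 0"
    using assms(6,7) by (simp_all add: C_def trace_sub trace_mat matrix_diff_ldistrib matrix_diff_rdistrib
        mat_mult_commute[of _ x] mat_mult_commute[of _ y])
  define I where "I = {..<?n} \<times> {..<?n} \<times> {1, \<i>}"
  define e where "e = (\<lambda>(i, j, s). mat s ** (mpow x i ** mpow y j))"
  have inner_e: "inner (e u) (e v) = (if u = v then real ?n else 0)" if "u \<in> I" "v \<in> I" for u v
  proof -
    obtain i j s k l t where "u = (i, j, s)" "v = (k, l, t)"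
      using prod_cases3 by metis
    then show ?thesis
      using that inner_scaled_monomials[OF x y q \<open>\<zeta> \<noteq> 0\<close> inj, of i j k l s t]
      by (simp add: I_def e_def)
  qed
  have inner_C: "inner (e u) C = 0" if "u \<in> I" for u
  proof -
    obtain i j s where "u = (i, j, s)"
      using prod_cases3 by metis
    then show ?thesis
      using that inner_scaled_monomial_traceless_commutant[OF x y q \<open>\<zeta> \<noteq> 0\<close> inj _ _ C]
      by (simp add: I_def e_def)
  qed
  have "inj_on e I"
  proof (rule inj_onI)
    fix u v
    assume "u \<in> I" "v \<in> I" "e u = e v"
    then show "u = v"
      using inner_e[of u v] inner_e[of u u] by (auto split: if_splits)
  qed
  have "C = 0"
  proof (rule eq_0_if_orthogonal_to_orthogonal_basis)
    show "pairwise orthogonal (e ` I)"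
      using inner_e by (auto simp: pairwise_def orthogonal_def)
    show "0 \<notin> e ` I"
      using inner_e by force
    show "DIM(complex^'n^'n) \<le> card (e ` I)"
      using card_image[OF \<open>inj_on e I\<close>] by (simp add: I_def card_cartesian_product)
    show "orthogonal v C" if "v \<in> e ` I" for v
      using that inner_C by (auto simp: orthogonal_def)
  qed
  then show ?thesis
    by (simp add: C_def)
qed

lemma SU_eq_central_mult_monomial:
  fixes x y z :: "complex^'n^'n"
  assumes x: "x \<in> SU" and y: "y \<in> SU" and z: "z \<in> SU"
    and q: "q_commute \<zeta> x y" and "\<zeta> \<noteq> 0" and inj: "inj_on ((^) \<zeta>) {..<CARD('n)}"
    and xz: "q_commute (\<zeta> ^ b) x z" and yz: "q_commute (\<zeta> ^ a) y z"
  shows "\<exists>w\<in>ZSU. z = w ** mpow (matrix_inv x) a ** mpow y b"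
proof -
  define u where "u = mpow (matrix_inv x) a ** mpow y b"
  define w where "w = z ** matrix_inv u"
  have u: "u \<in> SU"
    by (simp add: u_def mult_in_SU mpow_in_SU matrix_inv_in_SU x y)
  have xu: "q_commute (\<zeta> ^ b) x u"
    using q_commute_mult[OF q_commute_mpow[OF q_commute_matrix_inv[OF q_commute_refl
          SU_invertible[OF x] one_neq_zero]] q_commute_mpow[OF q], of a b]
    by (simp add: u_def)
  have yu: "q_commute (\<zeta> ^ a) y u"
    using q_commute_mult[OF q_commute_mpow[OF q_commute_matrix_inv[OF q_commute_sym[OF q \<open>\<zeta> \<noteq> 0\<close>]
          SU_invertible[OF x]]] q_commute_mpow[OF q_commute_refl], of a b] \<open>\<zeta> \<noteq> 0\<close>
    by (simp add: u_def)
  have "q_commute (\<zeta> ^ b * inverse (\<zeta> ^ b)) x w" "q_commute (\<zeta> ^ a * inverse (\<zeta> ^ a)) y w"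
    unfolding w_def using \<open>\<zeta> \<noteq> 0\<close> u
    by (intro q_commute_mult xz yz q_commute_matrix_inv xu yu SU_invertible; simp)+
  then have "x ** w = w ** x" "y ** w = w ** y"
    using \<open>\<zeta> \<noteq> 0\<close> by (simp_all add: q_commute_1_iff)
  then have "w = mat (trace w / of_nat CARD('n))"
    by (rule commutes_with_q_commuting_pair_imp_scalar[OF x y q \<open>\<zeta> \<noteq> 0\<close> inj])
  moreover have "w \<in> SU"
    by (simp add: w_def mult_in_SU matrix_inv_in_SU u z)
  moreover have "z = w ** u"
    by (simp add: w_def matrix_inv_mult SU_invertible[OF u] flip: matrix_mul_assoc)
  ultimately show ?thesis
    using scalar_in_ZSU by (auto simp: u_def matrix_mul_assoc)
qed

theorem lemma3p3:
  fixes x y z :: "nat \<Rightarrow> complex^'n^'n" and c :: "complex^'n^'n"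
    and m a b :: nat
  assumes "prime CARD('n)" and "m \<ge> 1"
    and "\<forall>i<m. x i \<in> SU" and "\<forall>i<m. y i \<in> SU" and "\<forall>i<m. z i \<in> SU"
    and "c \<in> ZSU" and "c \<noteq> mat 1"
    and "\<forall>i<m. comm (x i) (y i) = c"
    and "a < CARD('n)" and "b < CARD('n)"
    and "\<forall>i<m. comm (x i) (z i) = mpow c b"
    and "\<forall>i<m. comm (y i) (z i) = mpow c a"
  shows "\<exists>w :: nat \<Rightarrow> complex^'n^'n. (\<forall>i<m. w i \<in> ZSU) \<and>
           (\<forall>i<m. z i = w i ** mpow (matrix_inv (x i)) a ** mpow (y i) b)"
proof -
  obtain \<zeta> where c: "c = mat \<zeta>"
    using ZSU_imp_scalar[OF assms(6)] by blast
  have "\<zeta> ^ CARD('n) = 1"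
    using assms(6) by (simp add: c ZSU_def SU_def det_mat)
  then have "\<zeta> \<noteq> 0" and inj: "inj_on ((^) \<zeta>) {..<CARD('n)}"
    using assms(1,7) c by (auto simp: power_0_left intro: prime_root_of_unity_inj_on)
  have "\<exists>w\<in>ZSU. z i = w ** mpow (matrix_inv (x i)) a ** mpow (y i) b" if "i < m" for i
  proof (rule SU_eq_central_mult_monomial[OF _ _ _ _ \<open>\<zeta> \<noteq> 0\<close> inj])
    show "x i \<in> SU" "y i \<in> SU" "z i \<in> SU"
      using assms(3-5) that by auto
    then show "q_commute \<zeta> (x i) (y i)" "q_commute (\<zeta> ^ b) (x i) (z i)" "q_commute (\<zeta> ^ a) (y i) (z i)"
      using assms(8,11,12) that
      by (auto intro!: comm_eq_mat_imp_q_commute SU_invertible simp: c mpow_mat)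
  qed
  then show ?thesis
    by metis
qed

end
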